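(* Let $N\ge1$ and consider configurations $(S_{j,i},\sigma_i)$ with $S_{j,i}\in\{-1,0,1\}$ for $j\in\mathbb Z_6$, $i\in\mathbb Z_N$, and $\sigma_i\in\{-\tfrac12,\tfrac12\}$ (indices $j$ mod 6, $i$ mod $N$). Let $D\in\mathbb R$ and $$\mathcal H=\sum_{i=1}^N\Bigl[-\sum_{j=1}^{6}\bigl(S_{j,i}S_{j,i+1}+S_{j,i}S_{j+1,i}+S_{j,i}\sigma_i+D\,S_{j,i}^2\bigr)-\sigma_i\sigma_{i+1}\Bigr].$$ Then $\min\mathcal H/N=\min\bigl(-\tfrac{61}{4}-6D,\,-\tfrac14\bigr)$. Moreover, if $D>-\tfrac52$, the minimizers are exactly the two configurations with $S_{j,i}=\tau$, $\sigma_i=\tau/2$ for all $i,j$ ($\tau=\pm1$), with energy $N(-\tfrac{61}{4}-6D)$; if $D<-\tfrac52$, the minimizers are exactly the two configurations with all $S_{j,i}=0$ and all $\sigma_i$ equal, with energy $-N/4$.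
   Context: This is the mixed spin-1/2 (core, $\sigma_i$) and spin-1 (shell, $S_{j,i}$) hexagonal nanowire with couplings $J_1=J_s=J_c=1$ (core–shell, shell–shell, core–core) and single-ion anisotropy $D$, with periodic boundary conditions. The two ground states are called ferromagnetic (FM) and core-ferromagnetic (CFM). *)

theory Defs
  imports Complex_Main
begin

text \<open>Indices are 0-based and
  taken modulo 6 (for j) and modulo N (for i), i.e. periodic boundary conditions.\<close>

definition valid_config :: "nat \<Rightarrow> (nat \<Rightarrow> nat \<Rightarrow> int) \<Rightarrow> (nat \<Rightarrow> real) \<Rightarrow> bool" where
  "valid_config N S \<sigma> \<longleftrightarrow>
     (\<forall>i<N. \<forall>j<6. S j i \<in> {-1, 0, 1}) \<and> (\<forall>i<N. \<sigma> i \<in> {-1/2, 1/2})"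

definition hamiltonian :: "nat \<Rightarrow> real \<Rightarrow> (nat \<Rightarrow> nat \<Rightarrow> int) \<Rightarrow> (nat \<Rightarrow> real) \<Rightarrow> real" where
  "hamiltonian N D S \<sigma> =
     (\<Sum>i<N. - (\<Sum>j<6.
                   of_int (S j i) * of_int (S j ((i + 1) mod N))
                 + of_int (S j i) * of_int (S ((j + 1) mod 6) i)
                 + of_int (S j i) * \<sigma> i
                 + D * (of_int (S j i))\<^sup>2)
             - \<sigma> i * \<sigma> ((i + 1) mod N))"

end

theory Submission
  imports Defs
begin

(* Completing the squares of all bond products writes the energy as
     H = E - (5/2 + D) K - C,
   where K, the number of nonzero shell spins, lies in [0, 6N], the core bond sum C is at most
   N/4 with equality only for a uniform core, and the excess E, a sum of squared differences of
   neighbouring shell spins and of the core-shell terms S^2/2 - S sigma, is nonnegative and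
   vanishes only if every nonzero shell spin equals 2 sigma of its core. So H >= -(5/2 + D) K - N/4,
   which is minimal at K = 6N when D > -5/2 and at K = 0 when D < -5/2, and the minimizers are
   exactly the configurations making all three estimates tight. *)

lemma sum_lessThan_mod_shift:
  fixes f :: "nat \<Rightarrow> 'a::comm_monoid_add"
  shows "(\<Sum>i<n. f ((i + 1) mod n)) = (\<Sum>i<n. f i)"
proof (cases n)
  case (Suc m)
  have "(\<Sum>i<Suc m. f ((i + 1) mod Suc m)) = (\<Sum>i<m. f (Suc i)) + f 0"
    by (simp add: sum.lessThan_Suc)
  also have "\<dots> = (\<Sum>i<Suc m. f i)"
    by (subst sum.lessThan_Suc_shift) (simp add: add.commute)
  finally show ?thesis using Suc by simp
qed simp

lemma sum_mult_cyclic_shift: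
  fixes f :: "nat \<Rightarrow> real"
  shows "(\<Sum>i<n. f i * f ((i + 1) mod n))
       = (\<Sum>i<n. (f i)\<^sup>2) - (\<Sum>i<n. (f i - f ((i + 1) mod n))\<^sup>2) / 2"
proof -
  have "(\<Sum>i<n. (f i - f ((i + 1) mod n))\<^sup>2)
      = (\<Sum>i<n. (f i)\<^sup>2) + (\<Sum>i<n. (f ((i + 1) mod n))\<^sup>2) - 2 * (\<Sum>i<n. f i * f ((i + 1) mod n))"
    by (simp add: power2_diff sum.distrib sum_subtractf sum_distrib_left mult.assoc)
  with sum_lessThan_mod_shift[of "\<lambda>i. (f i)\<^sup>2" n] show ?thesis
    by linarith
qed

lemma eq_first_if_cyclic_neighbours_eq:
  fixes i n :: nat
  assumes "\<forall>i<n. f ((i + 1) mod n) = f i"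
  shows "i < n \<Longrightarrow> f i = f 0"
proof (induction i)
  case (Suc i)
  then have "f (Suc i) = f i" using assms by (metis Suc_eq_plus1 Suc_lessD mod_less)
  with Suc show ?case by simp
qed simp

lemma sum_sum_nonneg_eq_0_iff:
  fixes f :: "nat \<Rightarrow> nat \<Rightarrow> real"
  assumes "\<And>i j. i < m \<Longrightarrow> j < n \<Longrightarrow> 0 \<le> f i j"
  shows "(\<Sum>i<m. \<Sum>j<n. f i j) = 0 \<longleftrightarrow> (\<forall>i<m. \<forall>j<n. f i j = 0)"
proof -
  have "(\<Sum>i<m. \<Sum>j<n. f i j) = 0 \<longleftrightarrow> (\<forall>i<m. (\<Sum>j<n. f i j) = 0)"
    using assms by (subst sum_nonneg_eq_0_iff) (auto intro: sum_nonneg)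
  also have "\<dots> \<longleftrightarrow> (\<forall>i<m. \<forall>j<n. f i j = 0)"
  proof -
    have "(\<Sum>j<n. f i j) = 0 \<longleftrightarrow> (\<forall>j<n. f i j = 0)" if "i < m" for i
      using assms[OF that] by (subst sum_nonneg_eq_0_iff) auto
    then show ?thesis by auto
  qed
  finally show ?thesis .
qed

lemma valid_configD:
  assumes "valid_config N S \<sigma>" and "i < N"
  shows "j < 6 \<Longrightarrow> S j i \<in> {-1, 0, 1}" and "\<sigma> i \<in> {-1/2, 1/2}"
  using assms unfolding valid_config_def by blast+

definition shell_occupation :: "nat \<Rightarrow> (nat \<Rightarrow> nat \<Rightarrow> int) \<Rightarrow> real" where
  "shell_occupation N S = (\<Sum>i<N. \<Sum>j<6. (of_int (S j i))\<^sup>2)"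

definition core_bond_sum :: "nat \<Rightarrow> (nat \<Rightarrow> real) \<Rightarrow> real" where
  "core_bond_sum N \<sigma> = (\<Sum>i<N. \<sigma> i * \<sigma> ((i + 1) mod N))"

definition energy_excess :: "nat \<Rightarrow> (nat \<Rightarrow> nat \<Rightarrow> int) \<Rightarrow> (nat \<Rightarrow> real) \<Rightarrow> real" where
  "energy_excess N S \<sigma> = (\<Sum>i<N. \<Sum>j<6.
      ((of_int (S j i - S j ((i + 1) mod N)))\<^sup>2 + (of_int (S j i - S ((j + 1) mod 6) i))\<^sup>2) / 2
      + ((of_int (S j i))\<^sup>2 / 2 - of_int (S j i) * \<sigma> i))"

(* Each bond product is completed to a square, a b = (a^2 + b^2)/2 - (a - b)^2/2; summed around
   the periodic chain and around the hexagon, the squares a^2 and b^2 both add up to K. *)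
lemma hamiltonian_eq_excess:
  "hamiltonian N D S \<sigma>
     = energy_excess N S \<sigma> - (5/2 + D) * shell_occupation N S - core_bond_sum N \<sigma>"
proof -
  define s where "s j i = (of_int (S j i) :: real)" for j i
  define A where "A = (\<Sum>i<N. \<Sum>j<6::nat. (s j i - s j ((i + 1) mod N))\<^sup>2)"
  define B where "B = (\<Sum>i<N. \<Sum>j<6::nat. (s j i - s ((j + 1) mod 6) i)\<^sup>2)"
  define K where "K = (\<Sum>i<N. \<Sum>j<6::nat. (s j i)\<^sup>2)"
  have along: "(\<Sum>i<N. \<Sum>j<6::nat. s j i * s j ((i + 1) mod N)) = K - A / 2"
    using sum_mult_cyclic_shift[of "\<lambda>i. s _ i" N]
    unfolding K_def A_def
    by (subst (1 2 3) sum.swap) (simp add: sum_subtractf sum_divide_distrib)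
  have around: "(\<Sum>i<N. \<Sum>j<6::nat. s j i * s ((j + 1) mod 6) i) = K - B / 2"
    using sum_mult_cyclic_shift[of "\<lambda>j. s j _" 6]
    unfolding K_def B_def
    by (simp add: sum_subtractf sum_divide_distrib)
  have "energy_excess N S \<sigma> = (A + B + K) / 2 - (\<Sum>i<N. \<Sum>j<6. s j i * \<sigma> i)"
    unfolding energy_excess_def A_def B_def K_def s_def
    by (simp add: sum.distrib sum_subtractf sum_divide_distrib add_divide_distrib)
  moreover have "hamiltonian N D S \<sigma>
      = - (\<Sum>i<N. \<Sum>j<6::nat. s j i * s j ((i + 1) mod N))
        - (\<Sum>i<N. \<Sum>j<6::nat. s j i * s ((j + 1) mod 6) i)
        - (\<Sum>i<N. \<Sum>j<6. s j i * \<sigma> i) - D * K - core_bond_sum N \<sigma>"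
    unfolding hamiltonian_def core_bond_sum_def K_def s_def
    by (simp add: sum.distrib sum_subtractf sum_distrib_left sum_negf)
  moreover have "shell_occupation N S = K"
    unfolding shell_occupation_def K_def s_def ..
  ultimately show ?thesis
    using along around by (simp add: algebra_simps)
qed

lemma spin_one_sq:
  assumes "s \<in> {-1, 0, 1 :: int}"
  shows "(of_int s :: real)\<^sup>2 = (if s = 0 then 0 else 1)"
  using assms by auto

lemma core_shell_excess_nonneg:
  assumes "s \<in> {-1, 0, 1 :: int}" and "x \<in> {-1/2, 1/2 :: real}"
  shows "0 \<le> (of_int s)\<^sup>2 / 2 - of_int s * x"
  using assms by auto

lemma core_shell_excess_eq_0_imp:
  assumes "s \<in> {-1, 1 :: int}" and "x \<in> {-1/2, 1/2 :: real}"
    and "(of_int s)\<^sup>2 / 2 - of_int s * x = 0"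
  shows "of_int s = 2 * x"
  using assms by auto

lemma
  assumes "valid_config N S \<sigma>"
  shows shell_occupation_nonneg: "0 \<le> shell_occupation N S"
    and shell_occupation_le: "shell_occupation N S \<le> 6 * real N"
    and shell_occupation_eq_0_iff: "shell_occupation N S = 0 \<longleftrightarrow> (\<forall>i<N. \<forall>j<6. S j i = 0)"
    and shell_occupation_eq_max_iff:
      "shell_occupation N S = 6 * real N \<longleftrightarrow> (\<forall>i<N. \<forall>j<6. S j i \<noteq> 0)"
proof -
  have sq: "(of_int (S j i) :: real)\<^sup>2 = (if S j i = 0 then 0 else 1)" if "i < N" "j < 6" for i j
    using valid_configD(1)[OF assms that] by (rule spin_one_sq)
  have gap: "6 * real N - shell_occupation N S = (\<Sum>i<N. \<Sum>j<6. 1 - (of_int (S j i))\<^sup>2)"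
    unfolding shell_occupation_def by (simp add: sum_subtractf)
  show "0 \<le> shell_occupation N S"
    unfolding shell_occupation_def by (intro sum_nonneg) simp
  have "0 \<le> (\<Sum>i<N. \<Sum>j<6. 1 - (of_int (S j i) :: real)\<^sup>2)"
    using sq by (intro sum_nonneg) simp
  with gap show "shell_occupation N S \<le> 6 * real N"
    by linarith
  show "shell_occupation N S = 0 \<longleftrightarrow> (\<forall>i<N. \<forall>j<6. S j i = 0)"
    unfolding shell_occupation_def
    by (subst sum_sum_nonneg_eq_0_iff) auto
  have "shell_occupation N S = 6 * real N \<longleftrightarrow> (\<Sum>i<N. \<Sum>j<6. 1 - (of_int (S j i) :: real)\<^sup>2) = 0"
    using gap by linarith
  also have "\<dots> \<longleftrightarrow> (\<forall>i<N. \<forall>j<6. S j i \<noteq> 0)"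
    using sq by (subst sum_sum_nonneg_eq_0_iff) auto
  finally show "shell_occupation N S = 6 * real N \<longleftrightarrow> (\<forall>i<N. \<forall>j<6. S j i \<noteq> 0)" .
qed

lemma
  assumes "valid_config N S \<sigma>"
  shows energy_excess_nonneg: "0 \<le> energy_excess N S \<sigma>"
    and energy_excess_eq_0_imp:
      "energy_excess N S \<sigma> = 0 \<Longrightarrow> i < N \<Longrightarrow> j < 6 \<Longrightarrow> S j i \<noteq> 0
       \<Longrightarrow> of_int (S j i) = 2 * \<sigma> i"
proof -
  define t where "t i j =
      ((of_int (S j i - S j ((i + 1) mod N)))\<^sup>2 + (of_int (S j i - S ((j + 1) mod 6) i))\<^sup>2) / 2
      + ((of_int (S j i))\<^sup>2 / 2 - of_int (S j i) * \<sigma> i :: real)" for i j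
  have core_shell_le: "0 \<le> (of_int (S j i))\<^sup>2 / 2 - of_int (S j i) * \<sigma> i
      \<and> (of_int (S j i))\<^sup>2 / 2 - of_int (S j i) * \<sigma> i \<le> t i j"
    if "i < N" "j < 6" for i j
    unfolding t_def using valid_configD[OF assms that(1)] that(2) core_shell_excess_nonneg by auto
  have excess: "energy_excess N S \<sigma> = (\<Sum>i<N. \<Sum>j<6. t i j)"
    unfolding energy_excess_def t_def ..
  have t_nonneg: "0 \<le> t i j" if "i < N" "j < 6" for i j
    using core_shell_le[OF that] by linarith
  show "0 \<le> energy_excess N S \<sigma>"
    unfolding excess using t_nonneg by (force intro: sum_nonneg)
  assume "energy_excess N S \<sigma> = 0" "i < N" "j < 6" "S j i \<noteq> 0"
  then have "t i j = 0"
    using sum_sum_nonneg_eq_0_iff[of N 6 t] t_nonneg by (simp add: excess)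
  then have "(of_int (S j i))\<^sup>2 / 2 - of_int (S j i) * \<sigma> i = 0"
    using core_shell_le[OF \<open>i < N\<close> \<open>j < 6\<close>] by linarith
  moreover have "S j i \<in> {-1, 1}"
    using valid_configD(1)[OF assms \<open>i < N\<close> \<open>j < 6\<close>] \<open>S j i \<noteq> 0\<close> by auto
  ultimately show "of_int (S j i) = 2 * \<sigma> i"
    using core_shell_excess_eq_0_imp valid_configD(2)[OF assms \<open>i < N\<close>] by blast
qed

lemma
  assumes "valid_config N S \<sigma>"
  shows core_bond_sum_le: "core_bond_sum N \<sigma> \<le> real N / 4"
    and core_bond_sum_eq_max_imp: "core_bond_sum N \<sigma> = real N / 4 \<Longrightarrow> i < N \<Longrightarrow> \<sigma> i = \<sigma> 0"
proof -
  define d where "d i = (\<sigma> i - \<sigma> ((i + 1) mod N))\<^sup>2" for i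
  have "(\<sigma> i)\<^sup>2 = 1/4" if "i < N" for i
  proof -
    have "\<sigma> i = -1/2 \<or> \<sigma> i = 1/2"
      using valid_configD(2)[OF assms that] by simp
    then show ?thesis by (elim disjE; simp only:; simp add: power2_eq_square)
  qed
  then have "(\<Sum>i<N. (\<sigma> i)\<^sup>2) = (\<Sum>i<N. 1/4)"
    by (intro sum.cong) auto
  then have "(\<Sum>i<N. (\<sigma> i)\<^sup>2) = real N / 4"
    by simp
  then have bond: "core_bond_sum N \<sigma> = real N / 4 - (\<Sum>i<N. d i) / 2"
    unfolding core_bond_sum_def d_def using sum_mult_cyclic_shift[of \<sigma> N] by linarith
  show "core_bond_sum N \<sigma> \<le> real N / 4"
    unfolding bond d_def by (simp add: sum_nonneg)
  assume "core_bond_sum N \<sigma> = real N / 4"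
  then have "(\<Sum>i<N. d i) = 0"
    unfolding bond by simp
  moreover have "0 \<le> d i" for i
    unfolding d_def by simp
  ultimately have "\<forall>i<N. d i = 0"
    by (simp add: sum_nonneg_eq_0_iff)
  have "\<sigma> ((i + 1) mod N) = \<sigma> i" if "i < N" for i
  proof -
    have "(\<sigma> i - \<sigma> ((i + 1) mod N))\<^sup>2 = 0"
      using \<open>\<forall>i<N. d i = 0\<close> that unfolding d_def by blast
    then show ?thesis by simp
  qed
  then show "i < N \<Longrightarrow> \<sigma> i = \<sigma> 0"
    by (intro eq_first_if_cyclic_neighbours_eq) auto
qed

lemma hamiltonian_cong:
  assumes "\<And>i j. i < N \<Longrightarrow> j < 6 \<Longrightarrow> S j i = S' j i" and "\<And>i. i < N \<Longrightarrow> \<sigma> i = \<sigma>' i"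
  shows "hamiltonian N D S \<sigma> = hamiltonian N D S' \<sigma>'"
proof -
  define bonds where "bonds S \<sigma> i j =
      of_int (S j i) * of_int (S j ((i + 1) mod N)) + of_int (S j i) * of_int (S ((j + 1) mod 6) i)
      + of_int (S j i) * \<sigma> i + D * (of_int (S j i))\<^sup>2"
    for S :: "nat \<Rightarrow> nat \<Rightarrow> int" and \<sigma> :: "nat \<Rightarrow> real" and i j :: nat
  have next_site: "(i + 1) mod N < N" if "i < N" for i
    using that by simp
  have "bonds S \<sigma> i j = bonds S' \<sigma>' i j" if "i < N" "j < 6" for i j
  proof -
    have "(j + 1) mod 6 < (6::nat)"
      by simp
    then show ?thesis
      unfolding bonds_def using that next_site[OF \<open>i < N\<close>] by (simp only: assms)
  qed
  then have "(\<Sum>j<6. bonds S \<sigma> i j) = (\<Sum>j<6. bonds S' \<sigma>' i j)" if "i < N" for i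
    using that by (intro sum.cong) auto
  moreover have "\<sigma> ((i + 1) mod N) = \<sigma>' ((i + 1) mod N)" if "i < N" for i
    using assms(2) next_site[OF that] .
  ultimately show ?thesis
    unfolding hamiltonian_def bonds_def[symmetric] using assms(2) by (intro sum.cong refl) simp_all
qed

lemma hamiltonian_const:
  "hamiltonian N D (\<lambda>j i. t) (\<lambda>i. x)
     = real N * (- 6 * (2 * (of_int t)\<^sup>2 + of_int t * x + D * (of_int t)\<^sup>2) - x\<^sup>2)"
  unfolding hamiltonian_def by (simp add: power2_eq_square)

lemma hamiltonian_ge_min:
  assumes "valid_config N S \<sigma>"
  shows "real N * min (-61/4 - 6*D) (-1/4) \<le> hamiltonian N D S \<sigma>"
proof -
  have E: "0 \<le> energy_excess N S \<sigma>" and K: "0 \<le> shell_occupation N S" "shell_occupation N S \<le> 6 * real N"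
    and C: "core_bond_sum N \<sigma> \<le> real N / 4"
    using assms by (rule energy_excess_nonneg shell_occupation_nonneg shell_occupation_le core_bond_sum_le)+
  show ?thesis
  proof (cases "D \<ge> -5/2")
    case True
    then have "(5/2 + D) * shell_occupation N S \<le> (5/2 + D) * (6 * real N)"
      using K by (intro mult_left_mono) auto
    moreover have "real N * min (-61/4 - 6*D) (-1/4) \<le> real N * (-61/4 - 6*D)"
      by (intro mult_left_mono) auto
    ultimately show ?thesis
      using hamiltonian_eq_excess[of N D S \<sigma>] E C by (simp add: algebra_simps)
  next
    case False
    then have "(5/2 + D) * shell_occupation N S \<le> 0"
      using K by (intro mult_nonpos_nonneg) auto
    moreover have "real N * min (-61/4 - 6*D) (-1/4) \<le> real N * (-1/4)"
      by (intro mult_left_mono) auto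
    ultimately show ?thesis
      using hamiltonian_eq_excess[of N D S \<sigma>] E C by linarith
  qed
qed

lemma hamiltonian_min_attained:
  "\<exists>S \<sigma>. valid_config N S \<sigma> \<and> hamiltonian N D S \<sigma> = real N * min (-61/4 - 6*D) (-1/4)"
proof (cases "D \<ge> -5/2")
  case True
  then have "min (-61/4 - 6*D) (-1/4) = -61/4 - 6*D"
    by (intro min_absorb1) (simp add: field_simps)
  moreover have "hamiltonian N D (\<lambda>j i. 1) (\<lambda>i. 1/2) = real N * (-61/4 - 6*D)"
    by (simp add: hamiltonian_const power2_eq_square algebra_simps)
  moreover have "valid_config N (\<lambda>j i. 1) (\<lambda>i. 1/2)"
    unfolding valid_config_def by simp
  ultimately show ?thesis by metis
next
  case False
  then have "min (-61/4 - 6*D) (-1/4) = -1/4"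
    by (intro min_absorb2) (simp add: field_simps)
  moreover have "hamiltonian N D (\<lambda>j i. 0) (\<lambda>i. 1/2) = real N * (-1/4)"
    by (simp add: hamiltonian_const power2_eq_square)
  moreover have "valid_config N (\<lambda>j i. 0) (\<lambda>i. 1/2)"
    unfolding valid_config_def by simp
  ultimately show ?thesis by metis
qed

lemma ferromagnetic_minimum_tight:
  assumes "D > -5/2" and valid: "valid_config N S \<sigma>"
    and "hamiltonian N D S \<sigma> = real N * (-61/4 - 6*D)"
  shows "energy_excess N S \<sigma> = 0" and "shell_occupation N S = 6 * real N"
    and "core_bond_sum N \<sigma> = real N / 4"
proof -
  have "real N * (-61/4 - 6*D) = - (5/2 + D) * (6 * real N) - real N / 4"
    by (simp add: algebra_simps)
  moreover have "(5/2 + D) * shell_occupation N S \<le> (5/2 + D) * (6 * real N)"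
    using valid \<open>D > -5/2\<close> by (intro mult_left_mono shell_occupation_le) auto
  ultimately have "energy_excess N S \<sigma> = 0"
    and "(5/2 + D) * shell_occupation N S = (5/2 + D) * (6 * real N)"
    and "core_bond_sum N \<sigma> = real N / 4"
    using assms(3) hamiltonian_eq_excess[of N D S \<sigma>] energy_excess_nonneg[OF valid]
      core_bond_sum_le[OF valid]
    by linarith+
  then show "energy_excess N S \<sigma> = 0" and "shell_occupation N S = 6 * real N"
    and "core_bond_sum N \<sigma> = real N / 4"
    using \<open>D > -5/2\<close> by simp_all
qed

lemma ferromagnetic_ground_states:
  assumes "N \<ge> 1" and "D > -5/2" and valid: "valid_config N S \<sigma>"
  shows "hamiltonian N D S \<sigma> = real N * (-61/4 - 6*D) \<longleftrightarrow>
    (\<exists>\<tau>::int. \<tau> \<in> {-1, 1} \<and> (\<forall>i<N. \<sigma> i = of_int \<tau> / 2 \<and> (\<forall>j<6. S j i = \<tau>)))"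
proof
  assume "hamiltonian N D S \<sigma> = real N * (-61/4 - 6*D)"
  note tight = ferromagnetic_minimum_tight[OF \<open>D > -5/2\<close> valid this]
  from tight(2) have nonzero: "S j i \<noteq> 0" if "i < N" "j < 6" for i j
    using that shell_occupation_eq_max_iff[OF valid] by blast
  have aligned: "of_int (S j i) = 2 * \<sigma> i" if "i < N" "j < 6" for i j
    using energy_excess_eq_0_imp[OF valid tight(1) that nonzero[OF that]] .
  have uniform: "\<sigma> i = \<sigma> 0" if "i < N" for i
    using core_bond_sum_eq_max_imp[OF valid tight(3) that] .
  have "0 < N" using \<open>N \<ge> 1\<close> by simp
  then have "S 0 0 \<in> {-1, 0, 1}"
    using valid_configD(1)[OF valid] by simp
  then have "S 0 0 \<in> {-1, 1}"
    using nonzero[of 0 0] \<open>0 < N\<close> by auto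
  moreover have "\<sigma> i = of_int (S 0 0) / 2 \<and> (\<forall>j<6. S j i = S 0 0)" if "i < N" for i
  proof -
    have "of_int (S 0 0) = 2 * \<sigma> i"
      using aligned[of 0 0] uniform[OF that] \<open>0 < N\<close> by simp
    moreover have "of_int (S j i) = 2 * \<sigma> i" if "j < 6" for j
      using aligned \<open>i < N\<close> that .
    ultimately show ?thesis
      by (metis of_int_eq_iff nonzero_mult_div_cancel_left zero_neq_numeral)
  qed
  ultimately show "\<exists>\<tau>::int. \<tau> \<in> {-1, 1} \<and> (\<forall>i<N. \<sigma> i = of_int \<tau> / 2 \<and> (\<forall>j<6. S j i = \<tau>))"
    by blast
next
  assume "\<exists>\<tau>::int. \<tau> \<in> {-1, 1} \<and> (\<forall>i<N. \<sigma> i = of_int \<tau> / 2 \<and> (\<forall>j<6. S j i = \<tau>))"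
  then obtain \<tau> :: int where "\<tau> \<in> {-1, 1}" and \<tau>: "\<forall>i<N. \<sigma> i = of_int \<tau> / 2 \<and> (\<forall>j<6. S j i = \<tau>)"
    by blast
  have "hamiltonian N D S \<sigma> = hamiltonian N D (\<lambda>j i. \<tau>) (\<lambda>i. of_int \<tau> / 2)"
    using \<tau> by (intro hamiltonian_cong) auto
  also have "\<dots> = real N * (-61/4 - 6*D)"
    using \<open>\<tau> \<in> {-1, 1}\<close> by (auto simp: hamiltonian_const power2_eq_square algebra_simps)
  finally show "hamiltonian N D S \<sigma> = real N * (-61/4 - 6*D)" .
qed

lemma core_ferromagnetic_ground_states:
  assumes "N \<ge> 1" and "D < -5/2" and valid: "valid_config N S \<sigma>"
  shows "hamiltonian N D S \<sigma> = - real N / 4 \<longleftrightarrow>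
    (\<forall>i<N. \<forall>j<6. S j i = 0) \<and> (\<forall>i<N. \<forall>k<N. \<sigma> i = \<sigma> k)"
proof
  assume ground: "hamiltonian N D S \<sigma> = - real N / 4"
  have "(5/2 + D) * shell_occupation N S \<le> 0"
    using valid \<open>D < -5/2\<close> by (intro mult_nonpos_nonneg shell_occupation_nonneg) auto
  with ground hamiltonian_eq_excess[of N D S \<sigma>] energy_excess_nonneg[OF valid]
    core_bond_sum_le[OF valid]
  have "(5/2 + D) * shell_occupation N S = 0" and bonds: "core_bond_sum N \<sigma> = real N / 4"
    by linarith+
  then have "shell_occupation N S = 0"
    using \<open>D < -5/2\<close> by simp
  then have "\<forall>i<N. \<forall>j<6. S j i = 0"
    using shell_occupation_eq_0_iff[OF valid] by blast
  moreover have "\<sigma> i = \<sigma> k" if "i < N" "k < N" for i k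
    using core_bond_sum_eq_max_imp[OF valid bonds, of i] core_bond_sum_eq_max_imp[OF valid bonds, of k] that
    by simp
  ultimately show "(\<forall>i<N. \<forall>j<6. S j i = 0) \<and> (\<forall>i<N. \<forall>k<N. \<sigma> i = \<sigma> k)"
    by blast
next
  assume empty_shell: "(\<forall>i<N. \<forall>j<6. S j i = 0) \<and> (\<forall>i<N. \<forall>k<N. \<sigma> i = \<sigma> k)"
  have "0 < N" using \<open>N \<ge> 1\<close> by simp
  then have "hamiltonian N D S \<sigma> = hamiltonian N D (\<lambda>j i. 0) (\<lambda>i. \<sigma> 0)"
    using empty_shell by (intro hamiltonian_cong) blast+
  also have "\<dots> = - real N / 4"
  proof -
    have "\<sigma> 0 = -1/2 \<or> \<sigma> 0 = 1/2"
      using valid_configD(2)[OF valid \<open>0 < N\<close>] by simp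
    then show ?thesis
      by (elim disjE; simp only:; simp add: hamiltonian_const power2_eq_square)
  qed
  finally show "hamiltonian N D S \<sigma> = - real N / 4" .
qed

theorem mainTheorem8:
  fixes N :: nat and D :: real
  assumes "N \<ge> 1"
  shows "(\<forall>S \<sigma>. valid_config N S \<sigma> \<longrightarrow>
            hamiltonian N D S \<sigma> / real N \<ge> min (-61/4 - 6*D) (-1/4))
       \<and> (\<exists>S \<sigma>. valid_config N S \<sigma> \<and>
            hamiltonian N D S \<sigma> / real N = min (-61/4 - 6*D) (-1/4))
       \<and> (D > -5/2 \<longrightarrow>
            (\<forall>S \<sigma>. valid_config N S \<sigma> \<longrightarrow>
               (hamiltonian N D S \<sigma> = real N * (-61/4 - 6*D) \<longleftrightarrow>
                (\<exists>\<tau>::int. \<tau> \<in> {-1, 1} \<and>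
                   (\<forall>i<N. \<sigma> i = of_int \<tau> / 2 \<and> (\<forall>j<6. S j i = \<tau>))))))
       \<and> (D < -5/2 \<longrightarrow>
            (\<forall>S \<sigma>. valid_config N S \<sigma> \<longrightarrow>
               (hamiltonian N D S \<sigma> = - real N / 4 \<longleftrightarrow>
                ((\<forall>i<N. \<forall>j<6. S j i = 0) \<and> (\<forall>i<N. \<forall>k<N. \<sigma> i = \<sigma> k)))))"
proof (intro conjI allI impI)
  have N: "real N > 0" using assms by simp
  show "min (-61/4 - 6*D) (-1/4) \<le> hamiltonian N D S \<sigma> / real N" if "valid_config N S \<sigma>" for S \<sigma>
    using hamiltonian_ge_min[OF that] N by (simp add: pos_le_divide_eq mult.commute)
  obtain S \<sigma> where "valid_config N S \<sigma>"
    and ground: "hamiltonian N D S \<sigma> = real N * min (-61/4 - 6*D) (-1/4)"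
    using hamiltonian_min_attained by blast
  moreover have "hamiltonian N D S \<sigma> / real N = min (-61/4 - 6*D) (-1/4)"
    using ground N by simp
  ultimately show "\<exists>S \<sigma>. valid_config N S \<sigma> \<and> hamiltonian N D S \<sigma> / real N = min (-61/4 - 6*D) (-1/4)"
    by blast
qed (rule ferromagnetic_ground_states[OF assms] core_ferromagnetic_ground_states[OF assms]; assumption)+

end
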